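(* Let $L\geq1$ be an integer, $P\geq0$, $p_B\in[0,1]$, and $\alpha\sim\mathrm{Binomial}(L,1-p_B)$. For integers $i\geq0$ let $\bar R(i):=\mathbb{E}\big[\log\big(1+|\sum_{l=1}^i e^{j\theta_l}|^2P\big)\big]$ with $\theta_1,\theta_2,\ldots$ i.i.d. $\mathrm{Uniform}(0,2\pi)$, and let $\bar R_{\mathrm{out}}:=\sup_{r\in\mathbb{R}}r\cdot\mathbb{P}(\bar R(\alpha)\geq r)$. Then $$\bar R_{\mathrm{out}}\geq\mathbb{P}(\alpha\geq1)\bar R(1)=(1-p_B^L)\log(1+P).$$
   Context: $\bar R$ is a deterministic function (expectation over the $\theta_l$ only). $\log$ is the logarithm in a fixed base. *)

theory Defs
  imports "HOL-Probability.Probability"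
begin

definition Rbar :: "real \<Rightarrow> real \<Rightarrow> nat \<Rightarrow> real" where
  "Rbar b P i =
     (\<integral>\<theta>. log b (1 + (cmod (\<Sum>l\<in>{1..i}. cis (\<theta> l)))\<^sup>2 * P)
        \<partial>(PiM {1..i} (\<lambda>_. uniform_measure lborel {0..2*pi})))"

definition Rout :: "real \<Rightarrow> real \<Rightarrow> nat \<Rightarrow> real \<Rightarrow> real" where
  "Rout b P L pB =
     (SUP r\<in>(UNIV::real set). r * measure_pmf.prob (binomial_pmf L (1 - pB)) {k. Rbar b P k \<ge> r})"

end

theory Submission
  imports Defs "HOL-Complex_Analysis.Cauchy_Integral_Formula"
begin

text \<open>Fix all phases but the last and let s be their sum. Then
  1 + |s + e^(it)|^2 P = c |1 + w e^(it)|^2, where c is the larger root of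
  c^2 - (1 + P + P |s|^2) c + P^2 |s|^2 = 0 and |w| = P |s| / c < 1. As ln |1 + w z| is harmonic
  on the closed unit disc, the mean of ln (1 + |s + e^(it)|^2 P) over t is exactly ln c, and
  c >= 1 + P. Hence Rbar(i) >= log (1 + P) = Rbar(1) for all i >= 1, so the choice r = Rbar(1)
  in the supremum defining Rout gives the bound, with P(alpha >= 1) = 1 - pB^L.\<close>

lemma has_integral_ln_norm_1_plus_cis:
  fixes w :: complex
  assumes w: "norm w < 1"
  shows "((\<lambda>t. ln (cmod (1 + w * cis t))) has_integral 0) {0..2*pi}"
proof -
  have Re_pos: "0 < Re (1 + w * u)" if "u \<in> cball 0 1" for u
  proof -
    have "norm (w * u) < 1"
      using that w mult_left_le[of "cmod u" "cmod w"] by (simp add: norm_mult)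
    then show ?thesis using abs_Re_le_cmod[of "w * u"] by simp
  qed
  have "1 + w * u \<notin> \<real>\<^sub>\<le>\<^sub>0" if "u \<in> cball 0 1" for u
    using Re_pos[OF that] by (simp add: complex_nonpos_Reals_iff)
  then have "(\<lambda>u. Ln (1 + w * u)) holomorphic_on cball 0 1"
    by (intro holomorphic_intros) auto
  from Cauchy_integral_circlepath_simple[OF this, of 0]
  have "((\<lambda>u. Ln (1 + w * u) / u) has_contour_integral 0) (circlepath 0 1)"
    by simp
  then have "((\<lambda>t. Ln (1 + w * cis t) * \<i>) has_integral 0) {0..2*pi}"
    unfolding circlepath_def
    by (subst (asm) has_contour_integral_part_circlepath_iff) (auto simp: cis_neq_zero)
  from has_integral_linear[OF this bounded_linear_Im]
  have "((\<lambda>t. Re (Ln (1 + w * cis t))) has_integral 0) {0..2*pi}"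
    by (simp add: o_def)
  moreover have "1 + w * cis t \<noteq> 0" for t
    using Re_pos[of "cis t"] by (metis zero_complex.sel(1) less_irrefl mem_cball_0 norm_cis order_refl)
  ultimately show ?thesis by simp
qed

lemma integral_uniform_measure_interval:
  fixes h :: "real \<Rightarrow> real"
  assumes ab: "a < b" and h: "continuous_on UNIV h" and I: "(h has_integral I) {a..b}"
  shows "(\<integral>x. h x \<partial>uniform_measure lborel {a..b}) = I / (b - a)"
proof -
  have density: "uniform_measure lborel {a..b} = density lborel (\<lambda>x. ennreal (indicator {a..b} x / (b - a)))"
    using ab unfolding uniform_measure_def
    by (intro arg_cong[where f="density lborel"] ext)
       (auto simp: indicator_def divide_ennreal[symmetric] ennreal_1[symmetric] simp del: ennreal_1)
  have "(\<integral>x. h x \<partial>uniform_measure lborel {a..b}) = (\<integral>x. indicator {a..b} x / (b - a) * h x \<partial>lborel)"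
    unfolding density using h ab by (subst integral_density) (auto simp: borel_measurable_continuous_onI)
  also have "\<dots> = (LINT x : {a..b} | lborel. h x) / (b - a)"
    by (simp add: set_lebesgue_integral_def)
  also have "(LINT x : {a..b} | lborel. h x) = integral {a..b} h"
    using h by (intro set_borel_integral_eq_integral(2) borel_integrable_atLeastAtMost')
               (auto intro: continuous_on_subset)
  finally show ?thesis
    using I by (simp add: integral_unique)
qed

lemma one_plus_norm_add_sq_factor:
  fixes s e :: complex and P c :: real
  assumes e: "cmod e = 1" and c: "c \<noteq> 0"
    and root: "c\<^sup>2 - (1 + P + P * (cmod s)\<^sup>2) * c + P\<^sup>2 * (cmod s)\<^sup>2 = 0"
  shows "1 + (cmod (s + e))\<^sup>2 * P = c * (cmod (1 + (P * cnj s / c) * e))\<^sup>2"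
proof -
  define z where "z = 1 + (P * cnj s / c) * e"
  have e2: "(Re e)\<^sup>2 + (Im e)\<^sup>2 = 1"
    using e by (simp add: cmod_power2[symmetric])
  have reim: "c * Re z = c + P * (Re s * Re e + Im s * Im e)"
             "c * Im z = P * (Re s * Im e - Im s * Re e)"
    unfolding z_def using c by (simp_all add: field_simps)
  have "c * (c * (cmod z)\<^sup>2) = (c * Re z)\<^sup>2 + (c * Im z)\<^sup>2"
    unfolding cmod_power2 power_mult_distrib by algebra
  also have "\<dots> = c * c + 2 * c * P * (Re s * Re e + Im s * Im e) + P\<^sup>2 * (cmod s)\<^sup>2"
    using e2 unfolding reim cmod_power2 by algebra
  also have "\<dots> = c * (1 + (cmod (s + e))\<^sup>2 * P)"
    using root e2 unfolding cmod_power2 plus_complex.sel by algebra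
  finally show ?thesis
    using c unfolding z_def by simp
qed

text \<open>The larger root c of c^2 - (1 + P + P n^2) c + P^2 n^2 = 0. By the factorisation above,
  ln c is the mean of ln (1 + |s + e^(it)|^2 P) over t whenever |s| = n.\<close>
definition avg_gain :: "real \<Rightarrow> real \<Rightarrow> real" where
  "avg_gain P n = ((1 + P + P * n\<^sup>2) + sqrt ((1 + P + P * n\<^sup>2)\<^sup>2 - 4 * P\<^sup>2 * n\<^sup>2)) / 2"

lemma avg_gain_discriminant:
  fixes P n :: real
  shows "(1 + P + P * n\<^sup>2)\<^sup>2 - 4 * P\<^sup>2 * n\<^sup>2 = (1 + P - P * n\<^sup>2)\<^sup>2 + 4 * P * n\<^sup>2"
  by algebra

lemma avg_gain_root:
  assumes "P \<ge> 0"
  shows "(avg_gain P n)\<^sup>2 - (1 + P + P * n\<^sup>2) * avg_gain P n + P\<^sup>2 * n\<^sup>2 = 0"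
proof -
  have "(sqrt ((1 + P + P * n\<^sup>2)\<^sup>2 - 4 * P\<^sup>2 * n\<^sup>2))\<^sup>2 = (1 + P + P * n\<^sup>2)\<^sup>2 - 4 * P\<^sup>2 * n\<^sup>2"
    using assms unfolding avg_gain_discriminant by simp
  then show ?thesis
    unfolding avg_gain_def by (simp add: field_simps power2_eq_square)
qed

lemma avg_gain_ge:
  assumes "P \<ge> 0"
  shows "1 + P \<le> avg_gain P n"
proof -
  have "1 + P - P * n\<^sup>2 \<le> sqrt ((1 + P - P * n\<^sup>2)\<^sup>2 + 4 * P * n\<^sup>2)"
    using assms by (intro real_le_rsqrt) simp
  then show ?thesis
    unfolding avg_gain_def avg_gain_discriminant by simp
qed

lemma mult_less_avg_gain:
  assumes "P \<ge> 0"
  shows "P * n < avg_gain P n"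
proof -
  have "2 * (P * n) < 1 + P + P * n\<^sup>2"
    using assms mult_nonneg_nonneg[OF assms zero_le_power2[of "1 - n"]]
    by (simp add: power2_diff algebra_simps)
  moreover have "0 \<le> sqrt ((1 + P - P * n\<^sup>2)\<^sup>2 + 4 * P * n\<^sup>2)"
    using assms by simp
  ultimately show ?thesis
    unfolding avg_gain_def avg_gain_discriminant by (simp del: real_sqrt_ge_0_iff)
qed

lemma avg_gain_pos:
  assumes "P \<ge> 0"
  shows "0 < avg_gain P n"
  using avg_gain_ge[OF assms, of n] assms by linarith

lemma continuous_on_avg_gain: "continuous_on UNIV (avg_gain P)"
  unfolding avg_gain_def by (intro continuous_intros) auto

abbreviation phase :: "real measure" where
  "phase \<equiv> uniform_measure lborel {0..2*pi}"

lemma prob_space_phase: "prob_space phase"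
  by (rule prob_space_uniform_measure) auto

lemma integral_ln_one_plus_norm_add_cis:
  fixes s :: complex
  assumes P: "P \<ge> 0"
  shows "(\<integral>t. ln (1 + (cmod (s + cis t))\<^sup>2 * P) \<partial>phase) = ln (avg_gain P (cmod s))"
proof -
  define c where "c = avg_gain P (cmod s)"
  define w where "w = P * cnj s / c"
  have c: "0 < c"
    unfolding c_def using avg_gain_pos[OF P] .
  have w: "norm w < 1"
    using mult_less_avg_gain[OF P, of "cmod s"] c P unfolding w_def c_def
    by (simp add: norm_mult norm_divide)
  have nonzero: "1 + w * cis t \<noteq> 0" for t
    using w by (metis add_eq_0_iff norm_cis norm_minus_cancel norm_mult mult.right_neutral norm_one less_irrefl)
  have "ln (1 + (cmod (s + cis t))\<^sup>2 * P) = ln c + 2 * ln (cmod (1 + w * cis t))" for t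
  proof -
    have "1 + (cmod (s + cis t))\<^sup>2 * P = c * (cmod (1 + w * cis t))\<^sup>2"
      unfolding w_def using c avg_gain_root[OF P] by (intro one_plus_norm_add_sq_factor) (auto simp: c_def)
    then show ?thesis
      using c nonzero[of t] by (simp add: ln_mult ln_realpow)
  qed
  moreover have "((\<lambda>t. ln c + 2 * ln (cmod (1 + w * cis t))) has_integral 2 * pi * ln c) {0..2*pi}"
    using has_integral_add[OF has_integral_const_real[of "ln c" 0 "2*pi"]
        has_integral_mult_right[OF has_integral_ln_norm_1_plus_cis[OF w], of 2]]
    by (simp add: mult.commute)
  moreover have "continuous_on UNIV (\<lambda>t. ln (1 + (cmod (s + cis t))\<^sup>2 * P))"
    using P by (intro continuous_intros) (auto simp: add_pos_nonneg[THEN less_imp_neq, symmetric])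
  ultimately show ?thesis
    using integral_uniform_measure_interval[of 0 "2*pi"] by (simp add: c_def)
qed

lemma integrable_continuous_sum_cis:
  fixes g :: "complex \<Rightarrow> real"
  assumes g: "continuous_on UNIV g"
  shows "integrable (PiM I (\<lambda>_. phase)) (\<lambda>\<theta>. g (\<Sum>l\<in>I. cis (\<theta> l)))"
proof -
  interpret prob_space "PiM I (\<lambda>_. phase)"
    by (intro prob_space_PiM prob_space_phase)
  have "bounded (g ` cball 0 (card I))"
    by (intro compact_imp_bounded compact_continuous_image continuous_on_subset[OF g]) auto
  then obtain B where "\<forall>y\<in>g ` cball 0 (card I). norm y \<le> B"
    unfolding bounded_iff by blast
  then have B: "norm (g z) \<le> B" if "norm z \<le> card I" for z
    using that by (meson image_eqI mem_cball_0)
  have "norm (\<Sum>l\<in>I. cis (\<theta> l)) \<le> card I" for \<theta>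
    using norm_sum[of "\<lambda>l. cis (\<theta> l)" I] by simp
  moreover have "(\<lambda>\<theta>. \<Sum>l\<in>I. cis (\<theta> l)) \<in> borel_measurable (PiM I (\<lambda>_. phase))"
    unfolding cis_conv_exp by measurable
  ultimately show ?thesis
    using B borel_measurable_continuous_onI[OF g]
    by (intro integrable_const_bound[where B=B]) (auto intro: measurable_compose)
qed

lemma Rbar_Suc:
  assumes P: "P \<ge> 0"
  shows "Rbar b P (Suc k)
    = (\<integral>\<theta>. log b (avg_gain P (cmod (\<Sum>l\<in>{1..k}. cis (\<theta> l)))) \<partial>PiM {1..k} (\<lambda>_. phase))"
proof -
  interpret product_sigma_finite "\<lambda>_::nat. phase"
    by (simp add: product_sigma_finite_def prob_space_imp_sigma_finite prob_space_phase)
  define F where "F \<theta> = log b (1 + (cmod (\<Sum>l\<in>{1..Suc k}. cis (\<theta> l)))\<^sup>2 * P)" for \<theta>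
  have "integrable (PiM {1..Suc k} (\<lambda>_. phase)) F"
    unfolding F_def log_def using P
    by (intro integrable_divide_zero integrable_continuous_sum_cis continuous_intros)
       (auto simp: add_pos_nonneg[THEN less_imp_neq, symmetric])
  moreover have "{1..Suc k} = insert (Suc k) {1..k}"
    by auto
  ultimately have "Rbar b P (Suc k) = (\<integral>\<theta>. (\<integral>t. F (\<theta>(Suc k := t)) \<partial>phase) \<partial>PiM {1..k} (\<lambda>_. phase))"
    unfolding Rbar_def F_def[symmetric] by (simp add: product_integral_insert)
  also have "\<dots> = (\<integral>\<theta>. log b (avg_gain P (cmod (\<Sum>l\<in>{1..k}. cis (\<theta> l)))) \<partial>PiM {1..k} (\<lambda>_. phase))"
  proof (intro Bochner_Integration.integral_cong refl)
    fix \<theta> :: "nat \<Rightarrow> real"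
    have "F (\<theta>(Suc k := t)) = ln (1 + (cmod ((\<Sum>l\<in>{1..k}. cis (\<theta> l)) + cis t))\<^sup>2 * P) / ln b" for t
      by (simp add: F_def log_def add.commute)
    then show "(\<integral>t. F (\<theta>(Suc k := t)) \<partial>phase) = log b (avg_gain P (cmod (\<Sum>l\<in>{1..k}. cis (\<theta> l))))"
      using integral_ln_one_plus_norm_add_cis[OF P] by (simp add: log_def)
  qed
  finally show ?thesis .
qed

lemma Rbar_1: "Rbar b P 1 = log b (1 + P)"
  unfolding Rbar_def by (simp add: prob_space.prob_space[OF prob_space_PiM[OF prob_space_phase]])

lemma Rbar_ge_Rbar_1:
  assumes b: "b > 1" and P: "P \<ge> 0" and k: "1 \<le> k"
  shows "Rbar b P 1 \<le> Rbar b P k"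
proof -
  obtain j where j: "k = Suc j"
    using k by (cases k) auto
  interpret prob_space "PiM {1..j} (\<lambda>_. phase)"
    by (intro prob_space_PiM prob_space_phase)
  have "log b (1 + P) \<le> (\<integral>\<theta>. log b (avg_gain P (cmod (\<Sum>l\<in>{1..j}. cis (\<theta> l)))) \<partial>PiM {1..j} (\<lambda>_. phase))"
  proof (rule integral_ge_const)
    show "integrable (PiM {1..j} (\<lambda>_. phase)) (\<lambda>\<theta>. log b (avg_gain P (cmod (\<Sum>l\<in>{1..j}. cis (\<theta> l)))))"
      unfolding log_def using avg_gain_pos[OF P, THEN less_imp_neq]
      by (intro integrable_divide_zero integrable_continuous_sum_cis continuous_intros
          continuous_on_compose2[OF continuous_on_avg_gain]) auto
    show "AE \<theta> in PiM {1..j} (\<lambda>_. phase). log b (1 + P) \<le> log b (avg_gain P (cmod (\<Sum>l\<in>{1..j}. cis (\<theta> l))))"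
      using b P avg_gain_ge[OF P] avg_gain_pos[OF P] by (intro AE_I2) simp
  qed
  then show ?thesis
    unfolding Rbar_1 j Rbar_Suc[OF P] .
qed

lemma bdd_above_mult_prob_ge:
  fixes f :: "'a \<Rightarrow> real"
  assumes "bdd_above (f ` set_pmf p)"
  shows "bdd_above (range (\<lambda>r. r * measure_pmf.prob p {x. r \<le> f x}))"
proof -
  obtain B where B: "\<And>x. x \<in> set_pmf p \<Longrightarrow> f x \<le> B"
    using assms by (auto simp: bdd_above_def)
  have "r * measure_pmf.prob p {x. r \<le> f x} \<le> max 0 B" for r
  proof (cases "B < r")
    case True
    then have "set_pmf p \<inter> {x. r \<le> f x} = {}"
      using B by force
    then have "measure_pmf.prob p {x. r \<le> f x} = 0"
      by (simp add: measure_pmf_zero_iff)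
    then show ?thesis
      by simp
  next
    case False
    have "r * measure_pmf.prob p {x. r \<le> f x} \<le> max 0 r"
      by (cases "r \<le> 0") (auto simp: mult_nonpos_nonneg mult_left_le)
    with False show ?thesis by linarith
  qed
  then show ?thesis
    by (intro bdd_aboveI2)
qed

lemma prob_binomial_pmf_ge_1:
  assumes "0 \<le> q" "q \<le> 1"
  shows "measure_pmf.prob (binomial_pmf n q) {k. 1 \<le> k} = 1 - (1 - q) ^ n"
proof -
  have "{k. 1 \<le> k} = space (measure_pmf (binomial_pmf n q)) - {0}"
    by auto
  then have "measure_pmf.prob (binomial_pmf n q) {k. 1 \<le> k} = 1 - pmf (binomial_pmf n q) 0"
    using measure_pmf.prob_compl[of "{0}" "binomial_pmf n q"] by (simp add: measure_pmf_single)
  then show ?thesis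
    using assms by (simp add: pmf_binomial)
qed

theorem corollary2:
  fixes b P pB :: real and L :: nat
  assumes "b > 1" and "L \<ge> 1" and "P \<ge> 0" and "0 \<le> pB" and "pB \<le> 1"
  shows "Rout b P L pB \<ge> measure_pmf.prob (binomial_pmf L (1 - pB)) {k. k \<ge> 1} * Rbar b P 1
     \<and> measure_pmf.prob (binomial_pmf L (1 - pB)) {k. k \<ge> 1} * Rbar b P 1 = (1 - pB ^ L) * log b (1 + P)"
proof
  let ?p = "binomial_pmf L (1 - pB)"
  let ?r = "Rbar b P 1"
  have "{k. 1 \<le> k} \<subseteq> {k. ?r \<le> Rbar b P k}"
    using Rbar_ge_Rbar_1 assms by blast
  then have "measure_pmf.prob ?p {k. 1 \<le> k} \<le> measure_pmf.prob ?p {k. ?r \<le> Rbar b P k}"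
    by (intro measure_pmf.finite_measure_mono) auto
  moreover have "0 \<le> ?r"
    unfolding Rbar_1 using assms by simp
  ultimately have "measure_pmf.prob ?p {k. 1 \<le> k} * ?r \<le> ?r * measure_pmf.prob ?p {k. ?r \<le> Rbar b P k}"
    by (simp add: mult.commute mult_left_mono)
  also have "\<dots> \<le> Rout b P L pB"
    unfolding Rout_def using assms
    by (intro cSUP_upper bdd_above_mult_prob_ge bdd_above_finite finite_imageI finite_set_pmf_binomial_pmf) auto
  finally show "measure_pmf.prob ?p {k. k \<ge> 1} * ?r \<le> Rout b P L pB" .
  show "measure_pmf.prob ?p {k. k \<ge> 1} * ?r = (1 - pB ^ L) * log b (1 + P)"
    unfolding Rbar_1 using assms prob_binomial_pmf_ge_1[of "1 - pB" L] by simp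
qed

end
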